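(* Let $F$ satisfy the hypotheses of the scalar-offset setting (i.e. $F+r$ satisfies (A1) and (A3) for some $r\in\mathbb R$), and consider the linear family with basis $\psi=(F;1)$, i.e. $F_\theta=\theta_1F+\theta_2$, $\theta=(\theta_1,\theta_2)\in\Theta\subset\mathbb R^2$, assuming (A2) and (A4). Define $\theta^\circ_1=\arg\min_{\vartheta\in\mathbb R}[\Lambda_0(\vartheta F)-\vartheta\pi^1(F)]$ (assumed to exist), $\theta^\circ_2=0$, $\theta^\circ=(\theta^\circ_1,\theta^\circ_2)$, $r^\circ=\varrho_a-\Lambda_0(F_{\theta^\circ})$ and $\theta^*=\theta^\circ+r^\circ(0,1)$, and suppose $\theta^*\in\Theta$. Then $\theta^*$ minimizes $\theta\mapsto\bar J^*_\infty(\kappa;\theta)$ over $\Theta$ for every $\kappa>1$.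
   Context: Setting: $(\mathsf Y,\mathcal B)$ measurable space; $X^0,X^1$ mutually independent stationary $\mathsf Y$-valued processes with marginals $\pi^0,\pi^1$, independent of a change time $\tau_a$; $\nu(G)=\int G\,d\nu$. $\Lambda_0(G)=\lim_n\frac1n\log E[\exp(\sum_{k=0}^{n-1}G(X^0_k))]$. (A1) for a function $G$: $\pi^0(G)<0<\pi^1(G)$. (A2): for some $\varrho_a\in(0,\infty)$, $\lim_n\frac1n\log P\{\tau_a\ge n\}=-\varrho_a$. (A3) for a function $G$: with $\Upsilon_0(\vartheta)=\Lambda_0(\vartheta G)$, $G$ belongs to the class $\mathcal G$ (functions for which the cumulant generating functions for $X^0,X^1$ exist finitely and the twisted marginals, twisted processes and relative entropy rates exist); there exist $\vartheta_+>\vartheta_0>0$ with $\Upsilon_0(\vartheta_0)=0$, $\Upsilon_0(\vartheta_+)=\varrho_a$; $\Upsilon_0$ is finite and $C^1$ near $[0,\vartheta_+]$; $\vartheta G\in\mathcal G$ for $\vartheta$ near $[0,\vartheta_+]$. (A4): $\Theta$ open; each $F_\theta$ satisfies (A3); components of $\psi$ are in $\mathcal G$; $(\vartheta,\theta)\mapsto\Lambda_0(\vartheta F_\theta)$ is $C^1$ near $\{(\vartheta,\theta):\vartheta\in[0,\vartheta_+^\theta],\theta\in\Theta\}$; $v^\top\psi\equiv1$ with $v=(0,1)$. Notation: $\vartheta_+^\theta$ solves $\Lambda_0(\vartheta_+^\theta F_\theta)=\varrho_a$ as in (A3); $m_1^\theta=\pi^1(F_\theta)$ (assumed positive); $\bar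 J^*_\infty(\kappa;\theta)=\frac{\log\kappa}{m_1^\theta\vartheta_+^\theta}$. *)

theory Defs
  imports "HOL-Probability.Probability"
begin

definition lnE :: "ennreal \<Rightarrow> ereal" where
  "lnE x = (if x = \<top> then \<infinity> else if x = 0 then -\<infinity> else ereal (ln (enn2real x)))"

text \<open>The n-th (n = Suc m) normalised log-moment generating functional
  (1/n) log E[exp(sum_{k<n} G(X_k))].\<close>
definition cgf_seq :: "'a measure \<Rightarrow> (nat \<Rightarrow> 'a \<Rightarrow> 'y) \<Rightarrow> ('y \<Rightarrow> real) \<Rightarrow> nat \<Rightarrow> ereal" where
  "cgf_seq M X G m =
     lnE (\<integral>\<^sup>+ \<omega>. ennreal (exp (\<Sum>k<Suc m. G (X k \<omega>))) \<partial>M) / ereal (real (Suc m))"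

definition has_cgf :: "'a measure \<Rightarrow> (nat \<Rightarrow> 'a \<Rightarrow> 'y) \<Rightarrow> ('y \<Rightarrow> real) \<Rightarrow> bool" where
  "has_cgf M X G \<longleftrightarrow> (\<exists>L. cgf_seq M X G \<longlonglongrightarrow> L)"

definition has_finite_cgf :: "'a measure \<Rightarrow> (nat \<Rightarrow> 'a \<Rightarrow> 'y) \<Rightarrow> ('y \<Rightarrow> real) \<Rightarrow> bool" where
  "has_finite_cgf M X G \<longleftrightarrow> (\<exists>r::real. cgf_seq M X G \<longlonglongrightarrow> ereal r)"

definition cgf :: "'a measure \<Rightarrow> (nat \<Rightarrow> 'a \<Rightarrow> 'y) \<Rightarrow> ('y \<Rightarrow> real) \<Rightarrow> ereal" where
  "cgf M X G = (THE L. cgf_seq M X G \<longlonglongrightarrow> L)"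

definition marg :: "'a measure \<Rightarrow> 'y measure \<Rightarrow> (nat \<Rightarrow> 'a \<Rightarrow> 'y) \<Rightarrow> 'y measure" where
  "marg M Y X = distr M Y (X 0)"

definition mean :: "'y measure \<Rightarrow> ('y \<Rightarrow> real) \<Rightarrow> real" where
  "mean \<pi> G = integral\<^sup>L \<pi> G"

definition proc :: "(nat \<Rightarrow> 'a \<Rightarrow> 'y) \<Rightarrow> 'a \<Rightarrow> (nat \<Rightarrow> 'y)" where
  "proc X \<omega> = (\<lambda>k. X k \<omega>)"

definition stationary :: "'a measure \<Rightarrow> 'y measure \<Rightarrow> (nat \<Rightarrow> 'a \<Rightarrow> 'y) \<Rightarrow> bool" where
  "stationary M Y X \<longleftrightarrow> (\<forall>k. X k \<in> measurable M Y) \<and>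
     (\<forall>n. distr M (PiM UNIV (\<lambda>_. Y)) (\<lambda>\<omega> k. X (k + n) \<omega>) = distr M (PiM UNIV (\<lambda>_. Y)) (proc X))"

text \<open>Class G (partially): G measurable, pi^0- and pi^1-integrable,
  and the cumulant generating functions for X^0 and X^1 exist finitely.\<close>
definition classG :: "'a measure \<Rightarrow> 'y measure \<Rightarrow> (nat \<Rightarrow> 'a \<Rightarrow> 'y) \<Rightarrow> (nat \<Rightarrow> 'a \<Rightarrow> 'y)
                      \<Rightarrow> ('y \<Rightarrow> real) \<Rightarrow> bool" where
  "classG M Y X0 X1 G \<longleftrightarrow> G \<in> borel_measurable Y \<and>
      integrable (marg M Y X0) G \<and> integrable (marg M Y X1) G \<and>
      has_finite_cgf M X0 G \<and> has_finite_cgf M X1 G"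

definition A1 :: "'a measure \<Rightarrow> 'y measure \<Rightarrow> (nat \<Rightarrow> 'a \<Rightarrow> 'y) \<Rightarrow> (nat \<Rightarrow> 'a \<Rightarrow> 'y)
                  \<Rightarrow> ('y \<Rightarrow> real) \<Rightarrow> bool" where
  "A1 M Y X0 X1 G \<longleftrightarrow> mean (marg M Y X0) G < 0 \<and> 0 < mean (marg M Y X1) G"

definition A3 :: "'a measure \<Rightarrow> 'y measure \<Rightarrow> (nat \<Rightarrow> 'a \<Rightarrow> 'y) \<Rightarrow> (nat \<Rightarrow> 'a \<Rightarrow> 'y)
                  \<Rightarrow> real \<Rightarrow> ('y \<Rightarrow> real) \<Rightarrow> bool" where
  "A3 M Y X0 X1 rho G \<longleftrightarrow> classG M Y X0 X1 G \<and>
     (\<exists>th0 thp. 0 < th0 \<and> th0 < thp \<and>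
        cgf M X0 (\<lambda>y. th0 * G y) = ereal 0 \<and> cgf M X0 (\<lambda>y. thp * G y) = ereal rho \<and>
        (\<exists>U. open U \<and> {0..thp} \<subseteq> U \<and>
           (\<forall>th\<in>U. has_finite_cgf M X0 (\<lambda>y. th * G y) \<and> classG M Y X0 X1 (\<lambda>y. th * G y)) \<and>
           (\<lambda>th. real_of_ereal (cgf M X0 (\<lambda>y. th * G y))) C1_differentiable_on U))"

definition vplus :: "'a measure \<Rightarrow> (nat \<Rightarrow> 'a \<Rightarrow> 'y) \<Rightarrow> real \<Rightarrow> ('y \<Rightarrow> real) \<Rightarrow> real" where
  "vplus M X0 rho G = (SOME thp. \<exists>th0. 0 < th0 \<and> th0 < thp \<and>
        cgf M X0 (\<lambda>y. th0 * G y) = ereal 0 \<and> cgf M X0 (\<lambda>y. thp * G y) = ereal rho)"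

definition Ftheta :: "('y \<Rightarrow> real) \<Rightarrow> real \<times> real \<Rightarrow> 'y \<Rightarrow> real" where
  "Ftheta F \<theta> = (\<lambda>y. fst \<theta> * F y + snd \<theta>)"

definition Jbar :: "'a measure \<Rightarrow> 'y measure \<Rightarrow> (nat \<Rightarrow> 'a \<Rightarrow> 'y) \<Rightarrow> (nat \<Rightarrow> 'a \<Rightarrow> 'y)
                    \<Rightarrow> real \<Rightarrow> ('y \<Rightarrow> real) \<Rightarrow> real \<Rightarrow> real \<times> real \<Rightarrow> real" where
  "Jbar M Y X0 X1 rho F \<kappa> \<theta> =
     ln \<kappa> / (mean (marg M Y X1) (Ftheta F \<theta>) * vplus M X0 rho (Ftheta F \<theta>))"

end

theory Submission
  imports Defs
begin

text \<open>Write \<open>v\<close> for the root \<open>\<vartheta>\<^sub>+\<^sup>\<theta>\<close> of \<open>\<Lambda>\<^sub>0(v F\<^sub>\<theta>) = \<varrho>\<^sub>a\<close>. Adding a constant \<open>b\<close> to a function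
  shifts \<open>\<Lambda>\<^sub>0\<close> by \<open>b\<close>, so \<open>\<Lambda>\<^sub>0(v\<theta>\<^sub>1 F) = \<varrho>\<^sub>a - v\<theta>\<^sub>2\<close>, and the minimising property of \<open>\<theta>\<^sup>\<circ>\<^sub>1\<close>
  gives \<open>v \<pi>\<^sup>1(F\<^sub>\<theta>) = v\<theta>\<^sub>1 \<pi>\<^sup>1(F) + v\<theta>\<^sub>2 \<le> \<varrho>\<^sub>a - \<Lambda>\<^sub>0(\<theta>\<^sup>\<circ>\<^sub>1 F) + \<theta>\<^sup>\<circ>\<^sub>1 \<pi>\<^sup>1(F) = \<pi>\<^sup>1(F\<^sub>\<theta>\<^sub>*)\<close>.
  At \<open>\<theta>\<^sup>*\<close> the bound is attained with \<open>v = 1\<close>: \<open>\<Lambda>\<^sub>0(F\<^sub>\<theta>\<^sub>*) = \<varrho>\<^sub>a\<close> by the choice of the offset,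
  and \<open>t \<mapsto> \<Lambda>\<^sub>0(t F\<^sub>\<theta>\<^sub>*)\<close> is convex (by convexity of \<open>exp\<close> at every finite horizon) and vanishes at \<open>0\<close>
  and at \<open>\<vartheta>\<^sub>0 > 0\<close>, so it takes the positive value \<open>\<varrho>\<^sub>a\<close> only once.
  Hence \<open>m\<^sub>1\<^sup>\<theta> \<vartheta>\<^sub>+\<^sup>\<theta>\<close> is maximal, and \<open>J\<^sup>*\<^sub>\<infinity>(\<kappa>;\<theta>)\<close> minimal, at \<open>\<theta>\<^sup>*\<close>.\<close>

lemma convex_level_set_unique:
  fixes f :: "real \<Rightarrow> real"
  assumes convex: "\<And>l x z. 0 < l \<Longrightarrow> l < 1 \<Longrightarrow> x \<in> S \<Longrightarrow> z \<in> S \<Longrightarrow> l * x + (1 - l) * z \<in> S \<Longrightarrow>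
      f (l * x + (1 - l) * z) \<le> l * f x + (1 - l) * f z"
    and S: "0 \<in> S" "t0 \<in> S" "v \<in> S" "w \<in> S"
    and zeros: "f 0 = 0" "f t0 = 0" "0 < t0"
    and level: "f v = \<rho>" "f w = \<rho>" "0 < \<rho>"
    and pos: "t0 < v" "0 < w"
  shows "v = w"
proof -
  have between_zeros: "f s \<le> 0" if "s \<in> S" "0 < s" "s < t0" for s
  proof -
    have "s = (1 - s / t0) * 0 + (1 - (1 - s / t0)) * t0" using zeros(3) by simp
    with convex[of "1 - s / t0" 0 t0] that S zeros show ?thesis by (simp add: field_simps)
  qed
  have below_level: "f s < \<rho>" if "s \<in> S" "u \<in> S" "t0 < s" "s < u" "f u = \<rho>" for s u
  proof -
    define l where "l = (u - s) / (u - t0)"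
    have l: "0 < l" "l < 1" using that by (auto simp: l_def field_simps)
    have "s = l * t0 + (1 - l) * u"
      using that by (simp add: l_def divide_simps) (simp add: algebra_simps)
    with convex[OF l, of t0 u] that S zeros have "f s \<le> (1 - l) * \<rho>" by simp
    moreover have "(1 - l) * \<rho> < \<rho>" using l level(3) by (simp add: algebra_simps)
    ultimately show ?thesis by linarith
  qed
  have "t0 < w"
  proof (rule ccontr)
    assume "\<not> t0 < w"
    then consider "w = t0" | "w < t0" by linarith
    then show False
      using between_zeros[of w] S zeros level pos by cases auto
  qed
  show "v = w"
  proof (rule ccontr)
    assume "v \<noteq> w"
    then consider "v < w" | "w < v" by linarith
    then show False
      using below_level[of v w] below_level[of w v] S level pos \<open>t0 < w\<close> by cases auto
  qed
qed

lemma nn_integral_exp_convex_comb: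
  fixes S :: "'a \<Rightarrow> real" and l x z :: real
  assumes S: "S \<in> borel_measurable M" and l: "0 < l" "l < 1"
    and Ix: "(\<integral>\<^sup>+\<omega>. ennreal (exp (x * S \<omega>)) \<partial>M) = ennreal a" "0 < a"
    and Iz: "(\<integral>\<^sup>+\<omega>. ennreal (exp (z * S \<omega>)) \<partial>M) = ennreal b" "0 < b"
  shows "(\<integral>\<^sup>+\<omega>. ennreal (exp ((l * x + (1 - l) * z) * S \<omega>)) \<partial>M)
           \<le> ennreal (exp (l * ln a + (1 - l) * ln b))"
proof -
  define c where "c = l * ln a + (1 - l) * ln b"
  have pointwise: "exp ((l * x + (1 - l) * z) * t) \<le> exp c * ((l / a) * exp (x * t) + ((1 - l) / b) * exp (z * t))" for t
  proof -
    have "exp ((l * x + (1 - l) * z) * t - c) = exp ((1 - l) * (z * t - ln b) + l * (x * t - ln a))"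
      by (simp add: c_def algebra_simps)
    also have "\<dots> \<le> (1 - l) * exp (z * t - ln b) + l * exp (x * t - ln a)"
      using convex_onD[OF exp_convex, of l "z * t - ln b" "x * t - ln a"] l by simp
    also have "\<dots> = (l / a) * exp (x * t) + ((1 - l) / b) * exp (z * t)"
      using Ix(2) Iz(2) by (simp add: exp_diff field_simps)
    finally show ?thesis by (simp add: exp_diff divide_le_eq mult.commute)
  qed
  have split: "ennreal (exp c * ((l / a) * p + ((1 - l) / b) * q))
      = ennreal (exp c) * (ennreal (l / a) * ennreal p + ennreal ((1 - l) / b) * ennreal q)"
    if "0 \<le> p" "0 \<le> q" for p q
    using l Ix(2) Iz(2) that
    by (simp add: ennreal_mult[symmetric] ennreal_plus[symmetric] del: ennreal_plus)
  have "(\<integral>\<^sup>+\<omega>. ennreal (exp ((l * x + (1 - l) * z) * S \<omega>)) \<partial>M)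
     \<le> (\<integral>\<^sup>+\<omega>. ennreal (exp c) * (ennreal (l / a) * ennreal (exp (x * S \<omega>))
                                  + ennreal ((1 - l) / b) * ennreal (exp (z * S \<omega>))) \<partial>M)"
  proof (rule nn_integral_mono)
    fix \<omega>
    show "ennreal (exp ((l * x + (1 - l) * z) * S \<omega>)) \<le> ennreal (exp c) * (ennreal (l / a) * ennreal (exp (x * S \<omega>))
                                  + ennreal ((1 - l) / b) * ennreal (exp (z * S \<omega>)))"
      by (subst split[symmetric]) (simp_all only: exp_ge_zero ennreal_leI[OF pointwise])
  qed
  also have "\<dots> = ennreal (exp c) * (ennreal (l / a) * ennreal a + ennreal ((1 - l) / b) * ennreal b)"
    using S by (simp add: nn_integral_cmult nn_integral_add Ix(1) Iz(1))
  also have "\<dots> = ennreal (exp c)"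
    using split[of a b] l Ix(2) Iz(2) by simp
  finally show ?thesis by (simp add: c_def)
qed

lemma lnE_divide_eq_ereal:
  assumes "lnE I / ereal (real (Suc m)) = ereal p"
  obtains a where "0 < a" "I = ennreal a" "p = ln a / real (Suc m)"
proof -
  have "I \<noteq> \<top>" "I \<noteq> 0" using assms by (auto simp: lnE_def)
  then obtain a where "I = ennreal a" "0 < a"
    by (metis ennreal_cases ennreal_eq_0_iff not_le)
  with assms that show ?thesis by (auto simp: lnE_def)
qed

lemma cgf_seq_convex:
  fixes G :: "'y \<Rightarrow> real"
  assumes meas: "\<And>k. (\<lambda>\<omega>. G (X k \<omega>)) \<in> borel_measurable M"
    and l: "0 < l" "l < 1"
    and hx: "cgf_seq M X (\<lambda>y. x * G y) m = ereal px"
    and hz: "cgf_seq M X (\<lambda>y. z * G y) m = ereal pz"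
    and hy: "cgf_seq M X (\<lambda>y. (l * x + (1 - l) * z) * G y) m = ereal py"
  shows "py \<le> l * px + (1 - l) * pz"
proof -
  define S where "S = (\<lambda>\<omega>. \<Sum>k<Suc m. G (X k \<omega>))"
  have S: "S \<in> borel_measurable M" unfolding S_def using meas by auto
  have sum_eq: "(\<Sum>k<Suc m. t * G (X k \<omega>)) = t * S \<omega>" for t \<omega>
    by (simp add: S_def sum_distrib_left del: sum.lessThan_Suc)
  obtain a where a: "a > 0" "(\<integral>\<^sup>+\<omega>. ennreal (exp (x * S \<omega>)) \<partial>M) = ennreal a" "px = ln a / real (Suc m)"
    using hx unfolding cgf_seq_def sum_eq by (rule lnE_divide_eq_ereal)
  obtain b where b: "b > 0" "(\<integral>\<^sup>+\<omega>. ennreal (exp (z * S \<omega>)) \<partial>M) = ennreal b" "pz = ln b / real (Suc m)"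
    using hz unfolding cgf_seq_def sum_eq by (rule lnE_divide_eq_ereal)
  obtain d where d: "d > 0" "(\<integral>\<^sup>+\<omega>. ennreal (exp ((l * x + (1 - l) * z) * S \<omega>)) \<partial>M) = ennreal d"
      "py = ln d / real (Suc m)"
    using hy unfolding cgf_seq_def sum_eq by (rule lnE_divide_eq_ereal)
  have "d \<le> exp (l * ln a + (1 - l) * ln b)"
    using nn_integral_exp_convex_comb[OF S l a(2) a(1) b(2) b(1)] d(2) by simp
  then have "ln d \<le> l * ln a + (1 - l) * ln b"
    using d(1) by (metis ln_exp ln_le_cancel_iff exp_gt_zero)
  then have "ln d / real (Suc m) \<le> (l * ln a + (1 - l) * ln b) / real (Suc m)"
    by (simp add: divide_right_mono)
  then show ?thesis using a(3) b(3) d(3) by (simp add: add_divide_distrib)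
qed

lemma tendsto_ereal_eventually_finite:
  assumes "f \<longlonglongrightarrow> ereal L"
  shows "eventually (\<lambda>m. f m = ereal (real_of_ereal (f m))) sequentially"
proof -
  have "eventually (\<lambda>m. ereal (L - 1) < f m \<and> f m < ereal (L + 1)) sequentially"
    using assms by (intro eventually_conj order_tendstoD) auto
  then show ?thesis
  proof eventually_elim
    case (elim m)
    then show ?case by (cases "f m") auto
  qed
qed

lemma cgf_limit_convex:
  fixes G :: "'y \<Rightarrow> real"
  assumes meas: "\<And>k. (\<lambda>\<omega>. G (X k \<omega>)) \<in> borel_measurable M"
    and l: "0 < l" "l < 1"
    and hx: "cgf_seq M X (\<lambda>y. x * G y) \<longlonglongrightarrow> ereal Lx"
    and hz: "cgf_seq M X (\<lambda>y. z * G y) \<longlonglongrightarrow> ereal Lz"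
    and hy: "cgf_seq M X (\<lambda>y. (l * x + (1 - l) * z) * G y) \<longlonglongrightarrow> ereal Ly"
  shows "Ly \<le> l * Lx + (1 - l) * Lz"
proof -
  let ?rx = "\<lambda>m. real_of_ereal (cgf_seq M X (\<lambda>y. x * G y) m)"
  let ?rz = "\<lambda>m. real_of_ereal (cgf_seq M X (\<lambda>y. z * G y) m)"
  let ?ry = "\<lambda>m. real_of_ereal (cgf_seq M X (\<lambda>y. (l * x + (1 - l) * z) * G y) m)"
  have "(\<lambda>m. l * ?rx m + (1 - l) * ?rz m) \<longlonglongrightarrow> l * Lx + (1 - l) * Lz"
    using hx hz by (intro tendsto_intros) simp_all
  moreover have "?ry \<longlonglongrightarrow> Ly" using hy by simp
  moreover have "eventually (\<lambda>m. ?ry m \<le> l * ?rx m + (1 - l) * ?rz m) sequentially"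
    using tendsto_ereal_eventually_finite[OF hx] tendsto_ereal_eventually_finite[OF hy]
      tendsto_ereal_eventually_finite[OF hz]
  proof eventually_elim
    case (elim m)
    show ?case by (rule cgf_seq_convex[OF meas l elim(1) elim(3) elim(2)])
  qed
  ultimately show ?thesis by (rule tendsto_le[OF trivial_limit_sequentially])
qed

lemma cgf_seq_add_const:
  fixes G :: "'y \<Rightarrow> real"
  assumes meas: "\<And>k. (\<lambda>\<omega>. G (X k \<omega>)) \<in> borel_measurable M"
  shows "cgf_seq M X (\<lambda>y. G y + c) m = cgf_seq M X G m + ereal c"
proof -
  define I where "I = (\<integral>\<^sup>+\<omega>. ennreal (exp (\<Sum>k<Suc m. G (X k \<omega>))) \<partial>M)"
  define e where "e = exp (real (Suc m) * c)"
  have "(\<integral>\<^sup>+\<omega>. ennreal (exp (\<Sum>k<Suc m. G (X k \<omega>) + c)) \<partial>M)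
      = (\<integral>\<^sup>+\<omega>. ennreal (exp (\<Sum>k<Suc m. G (X k \<omega>))) * ennreal e \<partial>M)"
    by (simp add: sum.distrib e_def exp_add ennreal_mult del: sum.lessThan_Suc)
  also have "\<dots> = I * ennreal e"
    unfolding I_def using meas by (intro nn_integral_multc) auto
  finally have integral_eq: "(\<integral>\<^sup>+\<omega>. ennreal (exp (\<Sum>k<Suc m. G (X k \<omega>) + c)) \<partial>M) = I * ennreal e" .
  have "lnE (I * ennreal e) / ereal (real (Suc m)) = lnE I / ereal (real (Suc m)) + ereal c"
  proof (cases "I = \<top> \<or> I = 0")
    case True
    then show ?thesis by (auto simp: lnE_def e_def ennreal_mult_eq_top_iff)
  next
    case False
    then obtain a where a: "I = ennreal a" "a > 0"
      by (metis ennreal_cases ennreal_eq_0_iff not_le)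
    have "I * ennreal e = ennreal (a * e)" using a by (simp add: e_def ennreal_mult)
    moreover have "ln (a * e) = ln a + real (Suc m) * c"
      using a by (simp add: ln_mult e_def)
    ultimately show ?thesis using a
      by (simp add: lnE_def e_def ennreal_eq_0_iff add_divide_distrib not_le del: of_nat_Suc)
  qed
  then show ?thesis unfolding cgf_seq_def integral_eq I_def[symmetric] .
qed

lemma cgf_seq_add_const_tendsto_iff:
  fixes G :: "'y \<Rightarrow> real"
  assumes meas: "\<And>k. (\<lambda>\<omega>. G (X k \<omega>)) \<in> borel_measurable M"
  shows "cgf_seq M X (\<lambda>y. G y + c) \<longlonglongrightarrow> ereal r \<longleftrightarrow> cgf_seq M X G \<longlonglongrightarrow> ereal (r - c)"
proof -
  have shift: "cgf_seq M X (\<lambda>y. G y + c) = (\<lambda>m. cgf_seq M X G m + ereal c)"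
    using cgf_seq_add_const[of G X M c] meas by blast
  have unshift: "cgf_seq M X G = (\<lambda>m. cgf_seq M X (\<lambda>y. G y + c) m + ereal (- c))"
    unfolding shift by (rule ext, rename_tac m, case_tac "cgf_seq M X G m") auto
  show ?thesis
  proof
    assume "cgf_seq M X (\<lambda>y. G y + c) \<longlonglongrightarrow> ereal r"
    then have "cgf_seq M X G \<longlonglongrightarrow> ereal r + ereal (- c)"
      unfolding unshift by (intro tendsto_cadd_ereal) auto
    then show "cgf_seq M X G \<longlonglongrightarrow> ereal (r - c)" by simp
  next
    assume "cgf_seq M X G \<longlonglongrightarrow> ereal (r - c)"
    then have "cgf_seq M X (\<lambda>y. G y + c) \<longlonglongrightarrow> ereal (r - c) + ereal c"
      unfolding shift by (intro tendsto_cadd_ereal) auto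
    then show "cgf_seq M X (\<lambda>y. G y + c) \<longlonglongrightarrow> ereal r" by simp
  qed
qed

lemma cgf_eqI:
  assumes "cgf_seq M X G \<longlonglongrightarrow> L"
  shows "cgf M X G = L"
  unfolding cgf_def using assms by (auto intro: LIMSEQ_unique)

lemma cgf_seq_tendsto_cgf:
  assumes "has_finite_cgf M X G"
  shows "cgf_seq M X G \<longlonglongrightarrow> cgf M X G"
  using assms cgf_eqI by (fastforce simp: has_finite_cgf_def)

lemma cgf_seq_zero:
  assumes "prob_space M"
  shows "cgf_seq M X (\<lambda>y. 0) m = 0"
  using prob_space.emeasure_space_1[OF assms] by (simp add: cgf_seq_def lnE_def)

lemma vplus_spec:
  assumes "A3 M Y X X1 rho G"
  obtains th0 where "0 < th0" "th0 < vplus M X rho G"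
    "cgf M X (\<lambda>y. th0 * G y) = ereal 0" "cgf M X (\<lambda>y. vplus M X rho G * G y) = ereal rho"
proof -
  have "\<exists>thp th0. 0 < th0 \<and> th0 < thp \<and>
      cgf M X (\<lambda>y. th0 * G y) = ereal 0 \<and> cgf M X (\<lambda>y. thp * G y) = ereal rho"
    using assms unfolding A3_def by blast
  then have "\<exists>th0. 0 < th0 \<and> th0 < vplus M X rho G \<and>
      cgf M X (\<lambda>y. th0 * G y) = ereal 0 \<and> cgf M X (\<lambda>y. vplus M X rho G * G y) = ereal rho"
    unfolding vplus_def by (rule someI_ex)
  with that show ?thesis by blast
qed

lemma vplus_pos:
  assumes "A3 M Y X X1 rho G"
  shows "0 < vplus M X rho G"
proof -
  obtain th0 where "0 < th0" "th0 < vplus M X rho G" by (rule vplus_spec[OF assms])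
  then show ?thesis by simp
qed

lemma vplus_cgf_seq_tendsto:
  assumes A3: "A3 M Y X X1 rho G"
    and fin: "\<And>t. 0 \<le> t \<Longrightarrow> t \<le> vplus M X rho G \<Longrightarrow> has_finite_cgf M X (\<lambda>y. t * G y)"
  obtains th0 where "0 < th0" "th0 < vplus M X rho G"
    "cgf_seq M X (\<lambda>y. th0 * G y) \<longlonglongrightarrow> ereal 0"
    "cgf_seq M X (\<lambda>y. vplus M X rho G * G y) \<longlonglongrightarrow> ereal rho"
proof -
  obtain th0 where th0: "0 < th0" "th0 < vplus M X rho G"
      "cgf M X (\<lambda>y. th0 * G y) = ereal 0" "cgf M X (\<lambda>y. vplus M X rho G * G y) = ereal rho"
    by (rule vplus_spec[OF A3])
  show ?thesis
  proof (rule that[OF th0(1,2)])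
    show "cgf_seq M X (\<lambda>y. th0 * G y) \<longlonglongrightarrow> ereal 0"
      using cgf_seq_tendsto_cgf[OF fin[of th0]] th0 by simp
    show "cgf_seq M X (\<lambda>y. vplus M X rho G * G y) \<longlonglongrightarrow> ereal rho"
      using cgf_seq_tendsto_cgf[OF fin[of "vplus M X rho G"]] th0 by simp
  qed
qed

lemma vplus_eq_one:
  fixes G :: "'y \<Rightarrow> real"
  assumes prob: "prob_space M"
    and meas: "\<And>k. (\<lambda>\<omega>. G (X k \<omega>)) \<in> borel_measurable M"
    and A3: "A3 M Y X X1 rho G" and rho: "0 < rho"
    and fin: "\<And>t. 0 \<le> t \<Longrightarrow> t \<le> vplus M X rho G \<Longrightarrow> has_finite_cgf M X (\<lambda>y. t * G y)"
    and one: "cgf_seq M X G \<longlonglongrightarrow> ereal rho"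
  shows "vplus M X rho G = 1"
proof -
  define S where "S = {t. has_finite_cgf M X (\<lambda>y. t * G y)}"
  define f where "f t = real_of_ereal (cgf M X (\<lambda>y. t * G y))" for t
  have tendsto_f: "cgf_seq M X (\<lambda>y. t * G y) \<longlonglongrightarrow> ereal (f t)" if "t \<in> S" for t
    using that cgf_eqI by (fastforce simp: S_def f_def has_finite_cgf_def)
  have S_f_I: "t \<in> S \<and> f t = r" if "cgf_seq M X (\<lambda>y. t * G y) \<longlonglongrightarrow> ereal r" for t r
    using that cgf_eqI[OF that] by (auto simp: S_def f_def has_finite_cgf_def)
  obtain th0 where th0: "0 < th0" "th0 < vplus M X rho G"
      "cgf_seq M X (\<lambda>y. th0 * G y) \<longlonglongrightarrow> ereal 0"
      "cgf_seq M X (\<lambda>y. vplus M X rho G * G y) \<longlonglongrightarrow> ereal rho"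
    using vplus_cgf_seq_tendsto[OF A3 fin] by blast
  have "cgf_seq M X (\<lambda>y. 0) = (\<lambda>m. 0)"
    by (rule ext) (rule cgf_seq_zero[OF prob])
  then have "cgf_seq M X (\<lambda>y. 0 * G y) \<longlonglongrightarrow> ereal 0"
    by (simp add: zero_ereal_def[symmetric])
  note zero = S_f_I[OF this]
  have "cgf_seq M X (\<lambda>y. 1 * G y) \<longlonglongrightarrow> ereal rho" using one by simp
  note unit = S_f_I[OF this]
  note th0_S = S_f_I[OF th0(3)] and vplus_S = S_f_I[OF th0(4)]
  show ?thesis
  proof (rule convex_level_set_unique[of S f th0 "vplus M X rho G" 1 rho])
    show "f (l * x + (1 - l) * z) \<le> l * f x + (1 - l) * f z"
      if "0 < l" "l < 1" "x \<in> S" "z \<in> S" "l * x + (1 - l) * z \<in> S" for l x z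
      using cgf_limit_convex[OF meas that(1,2) tendsto_f[OF that(3)] tendsto_f[OF that(4)]
          tendsto_f[OF that(5)]] .
  qed (use zero unit th0_S vplus_S th0(1,2) rho in simp_all)
qed

lemma vplus_Ftheta_mean_le:
  fixes F :: "'y \<Rightarrow> real"
  assumes meas: "\<And>k. (\<lambda>\<omega>. F (X k \<omega>)) \<in> borel_measurable M"
    and argmin: "\<forall>th. has_cgf M X (\<lambda>y. th * F y) \<longrightarrow>
        cgf M X (\<lambda>y. t1 * F y) - ereal (t1 * m) \<le> cgf M X (\<lambda>y. th * F y) - ereal (th * m)"
    and L0: "cgf M X (\<lambda>y. t1 * F y) = ereal L0"
    and A3: "A3 M Y X X1 rho (Ftheta F \<theta>)"
    and fin: "\<And>t. 0 \<le> t \<Longrightarrow> t \<le> vplus M X rho (Ftheta F \<theta>) \<Longrightarrow>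
        has_finite_cgf M X (\<lambda>y. t * Ftheta F \<theta> y)"
  shows "vplus M X rho (Ftheta F \<theta>) * (fst \<theta> * m + snd \<theta>) \<le> rho - L0 + t1 * m"
proof -
  define a b where "a = vplus M X rho (Ftheta F \<theta>) * fst \<theta>"
    and "b = vplus M X rho (Ftheta F \<theta>) * snd \<theta>"
  obtain th0 where "cgf_seq M X (\<lambda>y. vplus M X rho (Ftheta F \<theta>) * Ftheta F \<theta> y) \<longlonglongrightarrow> ereal rho"
    by (rule vplus_cgf_seq_tendsto[OF A3 fin])
  then have "cgf_seq M X (\<lambda>y. a * F y + b) \<longlonglongrightarrow> ereal rho"
    by (simp add: a_def b_def Ftheta_def algebra_simps)
  then have "cgf_seq M X (\<lambda>y. a * F y) \<longlonglongrightarrow> ereal (rho - b)"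
    using cgf_seq_add_const_tendsto_iff[of "\<lambda>y. a * F y" X M b rho] meas by simp
  then have "has_cgf M X (\<lambda>y. a * F y)" and cgf_a: "cgf M X (\<lambda>y. a * F y) = ereal (rho - b)"
    using cgf_eqI by (auto simp: has_cgf_def)
  then have "cgf M X (\<lambda>y. t1 * F y) - ereal (t1 * m) \<le> cgf M X (\<lambda>y. a * F y) - ereal (a * m)"
    using argmin by blast
  then have "L0 - t1 * m \<le> rho - b - a * m" unfolding L0 cgf_a by simp
  then show ?thesis by (simp add: a_def b_def algebra_simps)
qed

lemma mean_Ftheta:
  assumes "prob_space P" "integrable P F"
  shows "mean P (Ftheta F \<theta>) = fst \<theta> * mean P F + snd \<theta>"
proof -
  interpret prob_space P by fact
  show ?thesis using assms(2) by (simp add: mean_def Ftheta_def prob_space)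
qed

lemma Jbar_le:
  assumes "1 < \<kappa>" "0 < mean (marg M Y X1) (Ftheta F \<theta>)" "0 < vplus M X0 rho (Ftheta F \<theta>)"
    and "mean (marg M Y X1) (Ftheta F \<theta>) * vplus M X0 rho (Ftheta F \<theta>)
      \<le> mean (marg M Y X1) (Ftheta F \<theta>') * vplus M X0 rho (Ftheta F \<theta>')"
  shows "Jbar M Y X0 X1 rho F \<kappa> \<theta>' \<le> Jbar M Y X0 X1 rho F \<kappa> \<theta>"
proof -
  have "0 < mean (marg M Y X1) (Ftheta F \<theta>) * vplus M X0 rho (Ftheta F \<theta>)"
    using assms(2,3) by simp
  with assms(4) show ?thesis
    unfolding Jbar_def using assms(1) by (intro divide_left_mono) (auto intro: mult_pos_pos)
qed

theorem propositiont:
  fixes M :: "'a measure" and Y :: "'y measure"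
    and X0 X1 :: "nat \<Rightarrow> 'a \<Rightarrow> 'y" and \<tau> :: "'a \<Rightarrow> nat"
    and rhoa :: real and F :: "'y \<Rightarrow> real" and \<Theta> :: "(real \<times> real) set"
    and \<theta>1o :: real
  assumes prob: "prob_space M"
    and stat0: "stationary M Y X0" and stat1: "stationary M Y X1"
    and tau_rv: "\<tau> \<in> measurable M (count_space UNIV)"
    and indep01: "prob_space.indep_var M (PiM UNIV (\<lambda>_. Y)) (proc X0) (PiM UNIV (\<lambda>_. Y)) (proc X1)"
    and indep_tau: "prob_space.indep_set M
        {(\<lambda>\<omega>. (proc X0 \<omega>, proc X1 \<omega>)) -` A \<inter> space M | A.
           A \<in> sets (PiM UNIV (\<lambda>_. Y) \<Otimes>\<^sub>M PiM UNIV (\<lambda>_. Y))}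
        {\<tau> -` B \<inter> space M | B. B \<in> sets (count_space (UNIV :: nat set))}"
    \<comment> \<open>scalar-offset setting: F + r satisfies (A1) and (A3) for some r\<close>
    and offset: "\<exists>r::real. A1 M Y X0 X1 (\<lambda>y. F y + r) \<and> A3 M Y X0 X1 rhoa (\<lambda>y. F y + r)"
    \<comment> \<open>(A2)\<close>
    and A2_pos: "0 < rhoa"
    and A2: "(\<lambda>n. ln (measure M {\<omega> \<in> space M. n \<le> \<tau> \<omega>}) / real n) \<longlonglongrightarrow> - rhoa"
    \<comment> \<open>(A4) for the linear family with basis psi = (F; 1)\<close>
    and Theta_open: "open \<Theta>"
    and A4_A3: "\<forall>\<theta>\<in>\<Theta>. A3 M Y X0 X1 rhoa (Ftheta F \<theta>)"
    and A4_psi: "classG M Y X0 X1 F \<and> classG M Y X0 X1 (\<lambda>_. 1)"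
    and A4_C1: "\<exists>U. open U \<and>
        {(th, \<theta>). \<theta> \<in> \<Theta> \<and> th \<in> {0..vplus M X0 rhoa (Ftheta F \<theta>)}} \<subseteq> U \<and>
        (\<forall>(th, \<theta>)\<in>U. has_finite_cgf M X0 (\<lambda>y. th * Ftheta F \<theta> y)) \<and>
        (\<exists>D :: real \<times> (real \<times> real) \<Rightarrow> (real \<times> (real \<times> real)) \<Rightarrow>\<^sub>L real.
           (\<forall>p\<in>U. ((\<lambda>(th, \<theta>). real_of_ereal (cgf M X0 (\<lambda>y. th * Ftheta F \<theta> y)))
                      has_derivative blinfun_apply (D p)) (at p)) \<and> continuous_on U D)"
    and m1_pos: "\<forall>\<theta>\<in>\<Theta>. 0 < mean (marg M Y X1) (Ftheta F \<theta>)"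
    \<comment> \<open>theta_1 minimises vartheta |-> Lambda_0(vartheta F) - vartheta pi^1(F) over R\<close>
    and argmin_fin: "has_finite_cgf M X0 (\<lambda>y. \<theta>1o * F y)"
    and argmin: "\<forall>th::real. has_cgf M X0 (\<lambda>y. th * F y) \<longrightarrow>
        cgf M X0 (\<lambda>y. \<theta>1o * F y) - ereal (\<theta>1o * mean (marg M Y X1) F)
          \<le> cgf M X0 (\<lambda>y. th * F y) - ereal (th * mean (marg M Y X1) F)"
    and star_in: "(\<theta>1o, 0 + (rhoa - real_of_ereal (cgf M X0 (Ftheta F (\<theta>1o, 0))))) \<in> \<Theta>"
  shows "\<forall>\<kappa>::real. \<kappa> > 1 \<longrightarrow>
     (\<forall>\<theta>\<in>\<Theta>. Jbar M Y X0 X1 rhoa F \<kappa> (\<theta>1o, 0 + (rhoa - real_of_ereal (cgf M X0 (Ftheta F (\<theta>1o, 0)))))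
                 \<le> Jbar M Y X0 X1 rhoa F \<kappa> \<theta>)"
proof -
  have measF: "(\<lambda>\<omega>. F (X0 k \<omega>)) \<in> borel_measurable M" for k
    using measurable_compose[of "X0 k" M Y F borel] stat0 A4_psi
    unfolding stationary_def classG_def by blast
  obtain L0 where L0: "cgf_seq M X0 (\<lambda>y. \<theta>1o * F y) \<longlonglongrightarrow> ereal L0"
    using argmin_fin by (auto simp: has_finite_cgf_def)
  define \<theta>s where "\<theta>s = (\<theta>1o, rhoa - L0)"
  have \<theta>s_eq: "(\<theta>1o, 0 + (rhoa - real_of_ereal (cgf M X0 (Ftheta F (\<theta>1o, 0))))) = \<theta>s"
    using cgf_eqI[OF L0] by (simp add: \<theta>s_def Ftheta_def)
  have \<theta>s_in: "\<theta>s \<in> \<Theta>" using star_in unfolding \<theta>s_eq .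
  have "prob_space (marg M Y X1)"
    using prob_space.prob_space_distr[OF prob] stat1 unfolding marg_def stationary_def by blast
  then have mean: "mean (marg M Y X1) (Ftheta F \<theta>) = fst \<theta> * mean (marg M Y X1) F + snd \<theta>" for \<theta>
    using A4_psi mean_Ftheta unfolding classG_def by blast
  obtain U where U: "{(th, \<theta>). \<theta> \<in> \<Theta> \<and> th \<in> {0..vplus M X0 rhoa (Ftheta F \<theta>)}} \<subseteq> U"
      "\<forall>(th, \<theta>)\<in>U. has_finite_cgf M X0 (\<lambda>y. th * Ftheta F \<theta> y)"
    using A4_C1 by blast
  have fin: "has_finite_cgf M X0 (\<lambda>y. t * Ftheta F \<theta> y)"
    if "\<theta> \<in> \<Theta>" "0 \<le> t" "t \<le> vplus M X0 rhoa (Ftheta F \<theta>)" for \<theta> t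
  proof -
    have "(t, \<theta>) \<in> U" using U(1) that by auto
    then show ?thesis using U(2) by auto
  qed
  have "vplus M X0 rhoa (Ftheta F \<theta>s) = 1"
  proof (rule vplus_eq_one[OF prob _ bspec[OF A4_A3 \<theta>s_in] A2_pos fin[OF \<theta>s_in]])
    show "cgf_seq M X0 (Ftheta F \<theta>s) \<longlonglongrightarrow> ereal rhoa"
      using cgf_seq_add_const_tendsto_iff[of "\<lambda>y. \<theta>1o * F y" X0 M "rhoa - L0" rhoa] L0 measF
      by (simp add: \<theta>s_def Ftheta_def)
  qed (use measF in \<open>simp add: Ftheta_def\<close>)
  then have optimal: "mean (marg M Y X1) (Ftheta F \<theta>) * vplus M X0 rhoa (Ftheta F \<theta>)
      \<le> mean (marg M Y X1) (Ftheta F \<theta>s) * vplus M X0 rhoa (Ftheta F \<theta>s)" if \<theta>: "\<theta> \<in> \<Theta>" for \<theta>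
    using vplus_Ftheta_mean_le[OF measF argmin cgf_eqI[OF L0] bspec[OF A4_A3 \<theta>] fin[OF \<theta>]]
    by (simp add: mean \<theta>s_def mult.commute)
  show ?thesis unfolding \<theta>s_eq
    using Jbar_le optimal m1_pos vplus_pos A4_A3 by blast
qed

end
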